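(* Let $A=(a(i,j))_{i,j\in I}$ be a generalized Cartan matrix over $I=\{1,\dots,n\}$ and let $W^{\mathrm{spin}}=W^{\mathrm{spin}}(A)$ be the group with presentation $\langle r_1,\dots,r_n\mid r_i^8=1\ (i\in I);\ r_j^{-1}r_i^2r_j=r_i^2r_j^{2n(i,j)}\ (i\ne j);\ \underbrace{r_ir_jr_i\cdots}_{m_{ij}}=\underbrace{r_jr_ir_j\cdots}_{m_{ij}}\ (i\ne j)\rangle$. Then for all $i\ne j\in I$: (a) $[r_i^2,r_j^2]=r_j^{4n(i,j)}$ and $r_i^{4n(j,i)}=r_j^{4n(i,j)}$; (b) if $n(i,j)=n(j,i)=1$ then $r_i^4=r_j^4$, and otherwise $[r_i^2,r_j^2]=1$; (c) if $n(i,j)=0$ and $n(j,i)=1$ then $r_i^4=1$; (d) $r_jr_i^4r_j^{-1}=r_i^4$ if $n(i,j)=0$ and $r_jr_i^4r_j^{-1}=r_i^2r_j^2r_i^2r_j^2$ if $n(i,j)=1$; (e) $[r_j,r_i^4]=1$. In particular, the subgroup $\langle r_i^4\mid i\in I\rangle$ is central in $W^{\mathrm{spin}}$.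
   Context: A generalized Cartan matrix satisfies $a(i,i)=2$, $a(i,j)\in\mathbb Z_{\le0}$ for $i\neq j$, and $a(i,j)=0\iff a(j,i)=0$. For $i\ne j$: $n(i,j)=0$ if $a(i,j)$ is even and $n(i,j)=1$ if $a(i,j)$ is odd; $m_{ij}=2,3,4,6$ if $a(i,j)a(j,i)=0,1,2,3$ respectively, and $m_{ij}=0$ (no braid relation) if $a(i,j)a(j,i)\ge4$. Commutator convention $[x,y]=x^{-1}y^{-1}xy$. *)

theory Defs
  imports "HOL-Algebra.Algebra"
begin

definition gcm :: "nat set \<Rightarrow> (nat \<Rightarrow> nat \<Rightarrow> int) \<Rightarrow> bool" where
  "gcm I a \<longleftrightarrow> (\<forall>i\<in>I. a i i = 2) \<and>
     (\<forall>i\<in>I. \<forall>j\<in>I. i \<noteq> j \<longrightarrow> a i j \<le> 0) \<and>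
     (\<forall>i\<in>I. \<forall>j\<in>I. i \<noteq> j \<longrightarrow> (a i j = 0 \<longleftrightarrow> a j i = 0))"

definition npar :: "(nat \<Rightarrow> nat \<Rightarrow> int) \<Rightarrow> nat \<Rightarrow> nat \<Rightarrow> nat" where
  "npar a i j = (if even (a i j) then 0 else 1)"

text \<open>Braid exponent m_ij (0 means no braid relation).\<close>
definition mexp :: "(nat \<Rightarrow> nat \<Rightarrow> int) \<Rightarrow> nat \<Rightarrow> nat \<Rightarrow> nat" where
  "mexp a i j = (let p = a i j * a j i in
     if p = 0 then 2 else if p = 1 then 3 else if p = 2 then 4 else if p = 3 then 6 else 0)"

fun alt_word :: "('g, 'b) monoid_scheme \<Rightarrow> 'g \<Rightarrow> 'g \<Rightarrow> nat \<Rightarrow> 'g" where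
  "alt_word G x y 0 = \<one>\<^bsub>G\<^esub>"
| "alt_word G x y (Suc m) = x \<otimes>\<^bsub>G\<^esub> alt_word G y x m"

definition commutator :: "('g, 'b) monoid_scheme \<Rightarrow> 'g \<Rightarrow> 'g \<Rightarrow> 'g" where
  "commutator G x y = inv\<^bsub>G\<^esub> x \<otimes>\<^bsub>G\<^esub> inv\<^bsub>G\<^esub> y \<otimes>\<^bsub>G\<^esub> x \<otimes>\<^bsub>G\<^esub> y"

definition spin_relations :: "('g, 'b) monoid_scheme \<Rightarrow> nat set \<Rightarrow> (nat \<Rightarrow> nat \<Rightarrow> int) \<Rightarrow> (nat \<Rightarrow> 'g) \<Rightarrow> bool" where
  "spin_relations G I a r \<longleftrightarrow>
     (\<forall>i\<in>I. r i \<in> carrier G) \<and>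
     (\<forall>i\<in>I. r i [^]\<^bsub>G\<^esub> (8::nat) = \<one>\<^bsub>G\<^esub>) \<and>
     (\<forall>i\<in>I. \<forall>j\<in>I. i \<noteq> j \<longrightarrow>
        inv\<^bsub>G\<^esub> (r j) \<otimes>\<^bsub>G\<^esub> r i [^]\<^bsub>G\<^esub> (2::nat) \<otimes>\<^bsub>G\<^esub> r j
          = r i [^]\<^bsub>G\<^esub> (2::nat) \<otimes>\<^bsub>G\<^esub> r j [^]\<^bsub>G\<^esub> (2 * npar a i j)) \<and>
     (\<forall>i\<in>I. \<forall>j\<in>I. i \<noteq> j \<longrightarrow>
        alt_word G (r i) (r j) (mexp a i j) = alt_word G (r j) (r i) (mexp a i j))"

end

(*
  Write s = r i ^ 2 and y = r j. The defining relation y^-1 s y = s y^(2 n(i,j)) says that y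
  commutes with s when n(i,j) = 0; when n(i,j) = 1, cancelling y turns it into s = y s y, i.e.
  conjugation by s inverts y. In both cases s^2 = r i ^ 4 commutes with y and
  [s, y^2] = y^(4 n(i,j)), which gives (d), (e) and the first half of (a). As [r j ^ 2, r i ^ 2] is
  the inverse of [r i ^ 2, r j ^ 2] and r i ^ 4 is an involution, comparing the two commutators
  yields r i ^ (4 n(j,i)) = r j ^ (4 n(i,j)), and (b), (c) follow. Centralizers are subgroups, so
  generators that commute pairwise generate subgroups that commute elementwise.
*)
theory Submission
  imports Defs
begin

definition centralizer :: "('g, 'b) monoid_scheme \<Rightarrow> 'g \<Rightarrow> 'g set" where
  "centralizer G a = {x \<in> carrier G. x \<otimes>\<^bsub>G\<^esub> a = a \<otimes>\<^bsub>G\<^esub> x}"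

lemma npar_le_1: "npar a i j \<le> 1"
  by (simp add: npar_def)

context group begin

lemma commutator_eq_one_iff:
  assumes "a \<in> carrier G" "b \<in> carrier G"
  shows "commutator G a b = \<one> \<longleftrightarrow> a \<otimes> b = b \<otimes> a"
proof -
  have "commutator G a b = inv (b \<otimes> a) \<otimes> (a \<otimes> b)"
    unfolding commutator_def using assms by (simp add: inv_mult_group m_assoc)
  then show ?thesis
    using assms by (metis inv_closed inv_inv m_closed inv_equality l_inv)
qed

lemma inv_commutator:
  assumes "a \<in> carrier G" "b \<in> carrier G"
  shows "inv (commutator G a b) = commutator G b a"
  unfolding commutator_def using assms by (simp add: inv_mult_group m_assoc)

lemma subgroup_centralizer:
  assumes "a \<in> carrier G"
  shows "subgroup (centralizer G a) G"
proof (rule subgroupI)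
  fix x assume "x \<in> centralizer G a"
  then have x: "x \<in> carrier G" and xa: "x \<otimes> a = a \<otimes> x"
    by (simp_all add: centralizer_def)
  have "inv x \<otimes> a = inv x \<otimes> (a \<otimes> x) \<otimes> inv x"
    using assms x by (simp add: m_assoc)
  also have "\<dots> = a \<otimes> inv x"
    using assms x by (simp add: xa[symmetric] m_assoc[symmetric])
  finally show "inv x \<in> centralizer G a"
    using x by (simp add: centralizer_def)
next
  fix x y assume "x \<in> centralizer G a" "y \<in> centralizer G a"
  then have x: "x \<in> carrier G" "x \<otimes> a = a \<otimes> x" and y: "y \<in> carrier G" "y \<otimes> a = a \<otimes> y"
    by (simp_all add: centralizer_def)
  have "x \<otimes> y \<otimes> a = x \<otimes> a \<otimes> y"
    using assms x(1) y by (simp add: m_assoc)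
  also have "\<dots> = a \<otimes> x \<otimes> y"
    by (simp add: x(2))
  also have "\<dots> = a \<otimes> (x \<otimes> y)"
    using assms x y by (simp add: m_assoc)
  finally show "x \<otimes> y \<in> centralizer G a"
    using x y by (simp add: centralizer_def)
qed (use assms in \<open>auto simp: centralizer_def\<close>)

lemma generate_commute:
  assumes A: "A \<subseteq> carrier G" and B: "B \<subseteq> carrier G"
    and commute: "\<And>a b. a \<in> A \<Longrightarrow> b \<in> B \<Longrightarrow> a \<otimes> b = b \<otimes> a"
    and a: "a \<in> generate G A" and b: "b \<in> generate G B"
  shows "a \<otimes> b = b \<otimes> a"
proof -
  have "generate G A \<subseteq> centralizer G b'" if "b' \<in> B" for b'
    using A B commute that
    by (intro generate_subgroup_incl subgroup_centralizer) (auto simp: centralizer_def)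
  then have "a \<otimes> b' = b' \<otimes> a" if "b' \<in> B" for b'
    using a that by (auto simp: centralizer_def)
  then have "B \<subseteq> centralizer G a"
    using B by (auto simp: centralizer_def)
  then have "generate G B \<subseteq> centralizer G a"
    using generate_incl[OF A] a by (intro generate_subgroup_incl subgroup_centralizer) auto
  then have "b \<otimes> a = a \<otimes> b"
    using b by (auto simp: centralizer_def)
  then show ?thesis
    by simp
qed

lemma twisted_conj_imp_inverts:
  assumes s: "s \<in> carrier G" and y: "y \<in> carrier G"
    and conj: "inv y \<otimes> s \<otimes> y = s \<otimes> (y \<otimes> y)"
  shows "y \<otimes> s = s \<otimes> inv y"
proof -
  have "s \<otimes> y = y \<otimes> (inv y \<otimes> s \<otimes> y)"
    using s y by (simp add: m_assoc[symmetric])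
  also have "\<dots> = y \<otimes> s \<otimes> y \<otimes> y"
    using s y by (simp add: conj m_assoc)
  finally have "s = y \<otimes> s \<otimes> y"
    using s y by (metis m_closed r_cancel)
  then show ?thesis
    using s y by (metis inv_solve_right' m_closed)
qed

lemma inverts_consequences:
  assumes s: "s \<in> carrier G" and y: "y \<in> carrier G"
    and inverts: "y \<otimes> s = s \<otimes> inv y"
  shows "commutator G s (y [^] (2::nat)) = y [^] (4::nat)"
    and "y \<otimes> s [^] (2::nat) = s [^] (2::nat) \<otimes> y"
    and "s \<otimes> y [^] (2::nat) \<otimes> s \<otimes> y [^] (2::nat) = s [^] (2::nat)"
proof -
  have inverts': "inv y \<otimes> s = s \<otimes> y"
    using inverts s y by (metis inv_closed inv_solve_left m_assoc m_closed r_inv r_one)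
  have inverts_z: "y \<otimes> (s \<otimes> z) = s \<otimes> (inv y \<otimes> z)"
    and inverts_z': "inv y \<otimes> (s \<otimes> z) = s \<otimes> (y \<otimes> z)" if "z \<in> carrier G" for z
    using inverts inverts' s y that by (metis inv_closed m_assoc)+
  have cancel: "inv a \<otimes> (a \<otimes> z) = z" if "a \<in> carrier G" "z \<in> carrier G" for a z
    using that by (simp add: m_assoc[symmetric])
  note rules = m_assoc numeral_eq_Suc commutator_def inv_mult_group inverts inverts' inverts_z inverts_z' cancel
  show "commutator G s (y [^] (2::nat)) = y [^] (4::nat)"
    using s y by (simp add: rules)
  show "y \<otimes> s [^] (2::nat) = s [^] (2::nat) \<otimes> y"
    using s y by (simp add: rules)
  show "s \<otimes> y [^] (2::nat) \<otimes> s \<otimes> y [^] (2::nat) = s [^] (2::nat)"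
    using s y by (simp add: rules)
qed

lemma spin_relation_consequences:
  fixes k :: nat
  assumes x: "x \<in> carrier G" and y: "y \<in> carrier G" and k: "k \<le> 1"
    and conj: "inv y \<otimes> x [^] (2::nat) \<otimes> y = x [^] (2::nat) \<otimes> y [^] (2 * k)"
  shows "commutator G (x [^] (2::nat)) (y [^] (2::nat)) = y [^] (4 * k)"
    and "y \<otimes> x [^] (4::nat) = x [^] (4::nat) \<otimes> y"
    and "k = 1 \<Longrightarrow> x [^] (2::nat) \<otimes> y [^] (2::nat) \<otimes> x [^] (2::nat) \<otimes> y [^] (2::nat) = x [^] (4::nat)"
proof -
  have x4: "x [^] (4::nat) = (x [^] (2::nat)) [^] (2::nat)"
    using x by (simp add: nat_pow_pow)
  have "(k = 0 \<and> y \<otimes> x [^] (2::nat) = x [^] (2::nat) \<otimes> y)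
      \<or> (k = 1 \<and> y \<otimes> x [^] (2::nat) = x [^] (2::nat) \<otimes> inv y)"
  proof (cases "k = 0")
    case True
    with conj have "inv y \<otimes> (x [^] (2::nat) \<otimes> y) = x [^] (2::nat)"
      using x y by (simp add: m_assoc)
    then have "x [^] (2::nat) \<otimes> y = y \<otimes> x [^] (2::nat)"
      using x y by (simp add: inv_solve_left')
    with True show ?thesis by simp
  next
    case False
    with k have "k = 1" by simp
    then have "y [^] (2 * k) = y \<otimes> y"
      using y by (simp add: numeral_2_eq_2)
    with conj have "inv y \<otimes> x [^] (2::nat) \<otimes> y = x [^] (2::nat) \<otimes> (y \<otimes> y)"
      by simp
    then have "y \<otimes> x [^] (2::nat) = x [^] (2::nat) \<otimes> inv y"
      by (rule twisted_conj_imp_inverts[OF nat_pow_closed[OF x] y])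
    with \<open>k = 1\<close> show ?thesis
      by simp
  qed
  then have "commutator G (x [^] (2::nat)) (y [^] (2::nat)) = y [^] (4 * k)
      \<and> y \<otimes> x [^] (4::nat) = x [^] (4::nat) \<otimes> y
      \<and> (k = 1 \<longrightarrow> x [^] (2::nat) \<otimes> y [^] (2::nat) \<otimes> x [^] (2::nat) \<otimes> y [^] (2::nat) = x [^] (4::nat))"
  proof (elim disjE conjE)
    assume "k = 0" and commute: "y \<otimes> x [^] (2::nat) = x [^] (2::nat) \<otimes> y"
    have "y [^] (2::nat) \<otimes> x [^] (2::nat) = x [^] (2::nat) \<otimes> y [^] (2::nat)"
      using group_commutes_pow[OF commute] x y by simp
    moreover have "y \<otimes> x [^] (4::nat) = x [^] (4::nat) \<otimes> y"
      using group_commutes_pow[OF commute[symmetric]] x y by (simp add: x4)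
    ultimately show ?thesis
      using \<open>k = 0\<close> x y by (simp add: commutator_eq_one_iff)
  next
    assume "k = 1" and "y \<otimes> x [^] (2::nat) = x [^] (2::nat) \<otimes> inv y"
    with inverts_consequences[OF nat_pow_closed[OF x] y this(2)] show ?thesis
      by (simp add: x4)
  qed
  then show "commutator G (x [^] (2::nat)) (y [^] (2::nat)) = y [^] (4 * k)"
    and "y \<otimes> x [^] (4::nat) = x [^] (4::nat) \<otimes> y"
    and "k = 1 \<Longrightarrow> x [^] (2::nat) \<otimes> y [^] (2::nat) \<otimes> x [^] (2::nat) \<otimes> y [^] (2::nat) = x [^] (4::nat)"
    by simp_all
qed

lemma inv_pow_4_mult_eq_self:
  fixes l :: nat
  assumes x: "x \<in> carrier G" and x8: "x [^] (8::nat) = \<one>"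
  shows "inv (x [^] (4 * l)) = x [^] (4 * l)"
proof (rule inv_equality)
  have "x [^] (4 * l) \<otimes> x [^] (4 * l) = (x [^] (8::nat)) [^] l"
    using x by (simp add: nat_pow_mult nat_pow_pow)
  then show "x [^] (4 * l) \<otimes> x [^] (4 * l) = \<one>"
    by (simp add: x8)
qed (use x in simp_all)

lemma spin_pair_relations:
  fixes k l :: nat
  assumes x: "x \<in> carrier G" and y: "y \<in> carrier G"
    and x8: "x [^] (8::nat) = \<one>"
    and k: "k \<le> 1" and l: "l \<le> 1"
    and conj_xy: "inv y \<otimes> x [^] (2::nat) \<otimes> y = x [^] (2::nat) \<otimes> y [^] (2 * k)"
    and conj_yx: "inv x \<otimes> y [^] (2::nat) \<otimes> x = y [^] (2::nat) \<otimes> x [^] (2 * l)"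
  shows "commutator G (x [^] (2::nat)) (y [^] (2::nat)) = y [^] (4 * k)
      \<and> x [^] (4 * l) = y [^] (4 * k)
      \<and> (if k = 1 \<and> l = 1
          then x [^] (4::nat) = y [^] (4::nat)
          else commutator G (x [^] (2::nat)) (y [^] (2::nat)) = \<one>)
      \<and> (k = 0 \<and> l = 1 \<longrightarrow> x [^] (4::nat) = \<one>)
      \<and> (k = 0 \<longrightarrow> y \<otimes> x [^] (4::nat) \<otimes> inv y = x [^] (4::nat))
      \<and> (k = 1 \<longrightarrow>
          y \<otimes> x [^] (4::nat) \<otimes> inv y
            = x [^] (2::nat) \<otimes> y [^] (2::nat) \<otimes> x [^] (2::nat) \<otimes> y [^] (2::nat))
      \<and> commutator G y (x [^] (4::nat)) = \<one>"
proof -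
  note xy = spin_relation_consequences[OF x y k conj_xy]
    and yx = spin_relation_consequences[OF y x l conj_yx]
  have "y [^] (4 * k) = inv (commutator G (y [^] (2::nat)) (x [^] (2::nat)))"
    using xy(1) x y by (simp add: inv_commutator)
  also have "\<dots> = inv (x [^] (4 * l))"
    by (simp add: yx(1))
  finally have pow4: "x [^] (4 * l) = y [^] (4 * k)"
    using inv_pow_4_mult_eq_self[OF x x8] by simp
  have conj4: "y \<otimes> x [^] (4::nat) \<otimes> inv y = x [^] (4::nat)"
    using xy(2) x y by (simp add: inv_solve_right')
  have comm4: "commutator G y (x [^] (4::nat)) = \<one>"
    using xy(2) x y by (simp add: commutator_eq_one_iff)
  have "k = 0 \<or> k = 1" "l = 0 \<or> l = 1"
    using k l by auto
  then show ?thesis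
    using xy(1,3) pow4 conj4 comm4 by (elim disjE) simp_all
qed

lemma spin_relationsD:
  assumes "spin_relations G I a r"
  shows "i \<in> I \<Longrightarrow> r i \<in> carrier G"
    and "i \<in> I \<Longrightarrow> r i [^] (8::nat) = \<one>"
    and "i \<in> I \<Longrightarrow> j \<in> I \<Longrightarrow> i \<noteq> j \<Longrightarrow>
      inv (r j) \<otimes> r i [^] (2::nat) \<otimes> r j = r i [^] (2::nat) \<otimes> r j [^] (2 * npar a i j)"
  using assms unfolding spin_relations_def by auto

lemma spin_fourth_power_commutes:
  assumes rel: "spin_relations G I a r" and i: "i \<in> I" and j: "j \<in> I"
  shows "r i [^] (4::nat) \<otimes> r j = r j \<otimes> r i [^] (4::nat)"
proof (cases "i = j")
  case True
  then show ?thesis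
    using spin_relationsD(1)[OF rel i] by (simp add: group_commutes_pow)
next
  case False
  note r = spin_relationsD[OF rel]
  show ?thesis
    using spin_relation_consequences(2)[OF r(1)[OF i] r(1)[OF j] npar_le_1 r(3)[OF i j False]]
    by simp
qed

lemma spin_fourth_powers_central:
  assumes rel: "spin_relations G I a r"
    and z: "z \<in> generate G ((\<lambda>i. r i [^] (4::nat)) ` I)" and w: "w \<in> generate G (r ` I)"
  shows "z \<otimes> w = w \<otimes> z"
proof (rule generate_commute[OF _ _ _ z w])
  show "(\<lambda>i. r i [^] (4::nat)) ` I \<subseteq> carrier G" "r ` I \<subseteq> carrier G"
    using spin_relationsD(1)[OF rel] by auto
  fix x y assume "x \<in> (\<lambda>i. r i [^] (4::nat)) ` I" "y \<in> r ` I"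
  then obtain i j where "i \<in> I" "j \<in> I" "x = r i [^] (4::nat)" "y = r j"
    by blast
  then show "x \<otimes> y = y \<otimes> x"
    using spin_fourth_power_commutes[OF rel] by simp
qed

end

theorem mainTheorem17:
  fixes G :: "('g, 'b) monoid_scheme" and n :: nat and a :: "nat \<Rightarrow> nat \<Rightarrow> int"
    and r :: "nat \<Rightarrow> 'g"
  assumes "group G"
    and "gcm {1..n} a"
    and "spin_relations G {1..n} a r"
  shows "(\<forall>i\<in>{1..n}. \<forall>j\<in>{1..n}. i \<noteq> j \<longrightarrow>
      commutator G (r i [^]\<^bsub>G\<^esub> (2::nat)) (r j [^]\<^bsub>G\<^esub> (2::nat))
        = r j [^]\<^bsub>G\<^esub> (4 * npar a i j)
      \<and> r i [^]\<^bsub>G\<^esub> (4 * npar a j i) = r j [^]\<^bsub>G\<^esub> (4 * npar a i j)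
      \<and> (if npar a i j = 1 \<and> npar a j i = 1
          then r i [^]\<^bsub>G\<^esub> (4::nat) = r j [^]\<^bsub>G\<^esub> (4::nat)
          else commutator G (r i [^]\<^bsub>G\<^esub> (2::nat)) (r j [^]\<^bsub>G\<^esub> (2::nat)) = \<one>\<^bsub>G\<^esub>)
      \<and> (npar a i j = 0 \<and> npar a j i = 1 \<longrightarrow> r i [^]\<^bsub>G\<^esub> (4::nat) = \<one>\<^bsub>G\<^esub>)
      \<and> (npar a i j = 0 \<longrightarrow>
          r j \<otimes>\<^bsub>G\<^esub> r i [^]\<^bsub>G\<^esub> (4::nat) \<otimes>\<^bsub>G\<^esub> inv\<^bsub>G\<^esub> (r j) = r i [^]\<^bsub>G\<^esub> (4::nat))
      \<and> (npar a i j = 1 \<longrightarrow>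
          r j \<otimes>\<^bsub>G\<^esub> r i [^]\<^bsub>G\<^esub> (4::nat) \<otimes>\<^bsub>G\<^esub> inv\<^bsub>G\<^esub> (r j)
            = r i [^]\<^bsub>G\<^esub> (2::nat) \<otimes>\<^bsub>G\<^esub> r j [^]\<^bsub>G\<^esub> (2::nat)
              \<otimes>\<^bsub>G\<^esub> r i [^]\<^bsub>G\<^esub> (2::nat) \<otimes>\<^bsub>G\<^esub> r j [^]\<^bsub>G\<^esub> (2::nat))
      \<and> commutator G (r j) (r i [^]\<^bsub>G\<^esub> (4::nat)) = \<one>\<^bsub>G\<^esub>)
    \<and> (\<forall>z\<in>generate G ((\<lambda>i. r i [^]\<^bsub>G\<^esub> (4::nat)) ` {1..n}).
         \<forall>x\<in>generate G (r ` {1..n}). z \<otimes>\<^bsub>G\<^esub> x = x \<otimes>\<^bsub>G\<^esub> z)"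
proof (rule conjI, goal_cases)
  interpret group G by fact
  note r = spin_relationsD[OF assms(3)]
  case 1
  show ?case
    by (intro ballI impI spin_pair_relations r npar_le_1) auto
  case 2
  show ?case
    using spin_fourth_powers_central[OF assms(3)] by blast
qed

end
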